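(* Let $H_\alpha(k)=-\Delta_\alpha(k)+V$, $k\in\mathbb T^d$, be the fiber magnetic Schrödinger operator on the fundamental graph $\mathcal G_*=(\mathcal V_*,\mathcal A_* )$ and put $v_x=V_x-\varkappa_x$, $\phi(\mathbf c,k)=\alpha(\mathbf c)+\langle\tau(\mathbf c),k\rangle$. Then $$\operatorname{Tr}H_\alpha(k)=\sum_{x\in\mathcal V_*}v_x+\sum_{\mathbf c\in\mathcal C_1}\cos\phi(\mathbf c,k),$$ $$\operatorname{Tr}H_\alpha^2(k)=\sum_{x\in\mathcal V_*}v_x^2+2\sum_{\mathbf c\in\mathcal C_1}v_{x_{\mathbf c}}\cos\phi(\mathbf c,k)+\sum_{\mathbf c\in\mathcal C_2}\cos\phi(\mathbf c,k),$$ $$\frac1{(2\pi)^d}\int_{\mathbb T^d}\operatorname{Tr}H_\alpha(k)dk=\sum_{x\in\mathcal V_*}v_x+\sum_{\mathbf c\in\mathcal C_1^0}\cos\alpha(\mathbf c),$$ $$\frac1{(2\pi)^d}\int_{\mathbb T^d}\operatorname{Tr}H_\alpha^2(k)dk=\sum_{x\in\mathcal V_*}v_x^2+2\sum_{\mathbf c\in\mathcal C_1^0}v_{x_{\mathbf c}}\cos\alpha(\mathbf c)+\sum_{\mathbf c\in\mathcal C_2^0}\cos\alpha(\mathbf c),$$ where $x_{\mathbf c}$ is the unique vertex of the cycle $\mathbf c\in\mathcal C_1$. If there are no loops in $\mathcal G_*$, then $\operatorname{Tr}H_\alpha(k)=\frac1{(2\pi)^d}\int_{\mathbb T^d}\operatorname{Tr}H_\alpha(k)dk=\sum_{x\in\mathcal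 V_*}v_x$, and if in addition there are no multiple edges in $\mathcal G_*$, then $$\operatorname{Tr}H_\alpha^2(k)=\frac1{(2\pi)^d}\int_{\mathbb T^d}\operatorname{Tr}H_\alpha^2(k)dk=\#\mathcal A_*+\sum_{x\in\mathcal V_*}v_x^2 .$$
   Context: Let $\Gamma\subset\mathbb R^d$ be a lattice with basis $\mathfrak a_1,\dots,\mathfrak a_d$ and fundamental cell $\Omega=\{\sum_sx_s\mathfrak a_s:(x_s)\in[0,1)^d\}$. Let $\mathcal G=(\mathcal V,\mathcal E)$ be a connected, locally finite, infinite graph embedded in $\mathbb R^d$ (loops and multiple edges allowed), invariant under translations by $\Gamma$, with finite quotient $\mathcal G_*=\mathcal G/\Gamma=(\mathcal V_*,\mathcal E_* )$; $\nu=\#\mathcal V_*$. Each unoriented edge gives two oriented edges; $\mathcal A,\mathcal A_*$ are the oriented edge sets (so $\#\mathcal A_*=\sum_x\varkappa_x$); $\underline{\mathbf e}$ is the inverse; $\varkappa_x$ is the number of oriented edges starting at $x$ (loops counted twice). Edge index: $x=x_0+[x]$ with $x_0\in\mathcal V\cap\Omega$, $[x]\in\Gamma$ with coordinates $[x]_{\mathbb A}\in\mathbb Z^d$; $\tau((x,y))=[y]_{\mathbb A}-[x]_{\mathbb A}$, defined on $\mathcal A_*$ by $\Gamma$-invariance. Periodic magnetic potential $\alpha:\mathcal A\to\mathbb R$ with $\alpha(\underline{\mathbf e})=-\alpha(\mathbf e)$, $\Gamma$-invariant; $V$ a real $\Gamma$-periodic function on $\mathcal V$ (viewed on $\mathcal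 V_*$). For $k\in\mathbb T^d=\mathbb R^d/(2\pi\mathbb Z)^d$: $H_\alpha(k)=A_\alpha(k)-\varkappa+V$ on $\mathbb C^\nu$, $(A_\alpha(k)f)_x=\sum_{\mathbf e=(x,y)\in\mathcal A_*}e^{i(\alpha(\mathbf e)+\langle\tau(\mathbf e),k\rangle)}f_y$, $(\varkappa f)_x=\varkappa_xf_x$, $(Vf)_x=V_xf_x$. Cycles in $\mathcal G_*$: ordered sequences of oriented edges $(\mathbf e_1,\dots,\mathbf e_n)$, $\mathbf e_s=(x_{s-1},x_s)$, $x_n=x_0$ (distinct cyclic shifts distinct, backtracking allowed); index $\tau(\mathbf c)=\sum\tau(\mathbf e)$; flux $\alpha(\mathbf c)=(\sum\alpha(\mathbf e))\bmod2\pi$. $\mathcal C_n$ = cycles of length $n$; $\mathcal C_n^0$ = those with zero index. In particular $\mathcal C_1$ consists of the oriented loops of $\mathcal G_*$. *)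

theory Defs
  imports "HOL-Analysis.Analysis"
begin

text \<open>Fundamental graph G_* : vertices = the finite type 'v, oriented edges = the
finite type 'e, with source/target maps src, tgt and the edge inversion einv.\<close>

definition graph_data ::
  "('e \<Rightarrow> 'v) \<Rightarrow> ('e \<Rightarrow> 'v) \<Rightarrow> ('e \<Rightarrow> 'e) \<Rightarrow> ('e \<Rightarrow> int^'d) \<Rightarrow> ('e \<Rightarrow> real) \<Rightarrow> bool" where
  "graph_data src tgt einv tau alpha \<longleftrightarrow>
     (\<forall>e. einv (einv e) = e \<and> einv e \<noteq> e \<and> src (einv e) = tgt e \<and> tgt (einv e) = src e
          \<and> tau (einv e) = - tau e \<and> alpha (einv e) = - alpha e)"

text \<open>kappa_x = number of oriented edges starting at x (loops counted twice, since
a loop and its inverse are two oriented edges starting at x).\<close>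
definition kappa :: "('e::finite \<Rightarrow> 'v) \<Rightarrow> 'v \<Rightarrow> nat" where
  "kappa src x = card {e. src e = x}"

definition pair_int :: "int^'d \<Rightarrow> real^'d \<Rightarrow> real" where
  "pair_int t k = (\<Sum>i\<in>UNIV. of_int (t $ i) * k $ i)"

definition Hmat ::
  "('e::finite \<Rightarrow> 'v::finite) \<Rightarrow> ('e \<Rightarrow> 'v) \<Rightarrow> ('e \<Rightarrow> int^'d) \<Rightarrow> ('e \<Rightarrow> real)
    \<Rightarrow> ('v \<Rightarrow> real) \<Rightarrow> real^'d \<Rightarrow> complex^'v^'v" where
  "Hmat src tgt tau alpha V k = (\<chi> x y.
      (\<Sum>e\<in>{e. src e = x \<and> tgt e = y}. cis (alpha e + pair_int (tau e) k))
      + (if x = y then complex_of_real (V x - real (kappa src x)) else 0))"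

definition cycles :: "('e::finite \<Rightarrow> 'v) \<Rightarrow> ('e \<Rightarrow> 'v) \<Rightarrow> nat \<Rightarrow> 'e list set" where
  "cycles src tgt n = {c. length c = n \<and> n \<ge> 1 \<and>
      (\<forall>s. Suc s < n \<longrightarrow> tgt (c ! s) = src (c ! Suc s)) \<and>
      tgt (c ! (n - 1)) = src (c ! 0)}"

definition cyc_index :: "('e \<Rightarrow> int^'d) \<Rightarrow> 'e list \<Rightarrow> int^'d" where
  "cyc_index tau c = sum_list (map tau c)"

text \<open>Flux (as a real representative; only cos of it is used, so reduction mod 2 pi
is immaterial).\<close>
definition flux :: "('e \<Rightarrow> real) \<Rightarrow> 'e list \<Rightarrow> real" where
  "flux alpha c = sum_list (map alpha c)"

definition cycles0 :: "('e::finite \<Rightarrow> 'v) \<Rightarrow> ('e \<Rightarrow> 'v) \<Rightarrow> ('e \<Rightarrow> int^'d) \<Rightarrow> nat \<Rightarrow> 'e list set" where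
  "cycles0 src tgt tau n = {c \<in> cycles src tgt n. cyc_index tau c = 0}"

definition phase :: "('e \<Rightarrow> int^'d) \<Rightarrow> ('e \<Rightarrow> real) \<Rightarrow> 'e list \<Rightarrow> real^'d \<Rightarrow> real" where
  "phase tau alpha c k = flux alpha c + pair_int (cyc_index tau c) k"

text \<open>The torus T^d, parametrised by the cube [0, 2 pi]^d.\<close>
definition torus_cube :: "(real^'d) set" where
  "torus_cube = cbox 0 (\<chi> i. 2 * pi)"

definition no_loops :: "('e \<Rightarrow> 'v) \<Rightarrow> ('e \<Rightarrow> 'v) \<Rightarrow> bool" where
  "no_loops src tgt \<longleftrightarrow> (\<forall>e. src e \<noteq> tgt e)"

definition no_multi_edges :: "('e \<Rightarrow> 'v) \<Rightarrow> ('e \<Rightarrow> 'v) \<Rightarrow> bool" where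
  "no_multi_edges src tgt \<longleftrightarrow> (\<forall>e e'. src e = src e' \<and> tgt e = tgt e' \<longrightarrow> e = e')"

end

(* The diagonal of H(k) is v plus the loop terms, and the diagonal of H(k)^2 is
   sum_y H(k)_xy H(k)_yx, which splits into v_x^2, loop terms weighted by 2 v_x, and closed
   walks of length two.  Reversing a cycle and inverting its edges is an involution on the
   cycles of each length that fixes the base vertex and negates the phase, so the sums of
   exp(i phi) are the real sums of cos phi.  Averaging over the torus kills every character
   exp(i <t, k>) with t <> 0, since a translation by half a period in a direction with
   t_j <> 0 changes its sign; only the cycles of zero index survive. *)

theory Submission
  imports Defs
begin

lemma torus_cube_Int_halfspace:
  fixes c :: real
  assumes "0 \<le> c" "c \<le> 2 * pi"
  shows "torus_cube \<inter> {x::real^'d. x \<bullet> axis j 1 \<le> c} = cbox 0 (\<chi> i. if i = j then c else 2 * pi)"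
    and "torus_cube \<inter> {x::real^'d. x \<bullet> axis j 1 \<ge> c} = cbox (\<chi> i. if i = j then c else 0) (\<chi> i. 2 * pi)"
  using assms by (auto simp: torus_cube_def mem_box_cart inner_axis split: if_splits) (metis order_trans)+

lemma integral_torus_cube_translate_axis:
  fixes f :: "real^'d \<Rightarrow> 'a::banach"
  assumes cont: "continuous_on UNIV f"
    and periodic: "\<And>x. f (x + (2 * pi) *\<^sub>R axis j 1) = f x"
    and s: "0 \<le> s" "s \<le> 2 * pi"
  shows "integral torus_cube (\<lambda>x. f (x + s *\<^sub>R axis j 1)) = integral torus_cube f"
proof -
  define e :: "real^'d" where "e = axis j 1"
  define c where "c = 2 * pi - s"
  have c: "0 \<le> c" "c \<le> 2 * pi" using s by (auto simp: c_def)
  have e: "e \<in> Basis" by (simp add: e_def)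
  have f_int: "\<And>a b. f integrable_on cbox a b"
    using cont continuous_on_subset integrable_continuous by blast
  define g where "g = (\<lambda>x. f (x + s *\<^sub>R e))"
  have g_shift: "g = f \<circ> (+) (s *\<^sub>R e)"
    by (auto simp: g_def add.commute)
  have g_shift_back: "g = f \<circ> (+) ((s - 2 * pi) *\<^sub>R e)"
  proof
    fix x
    have "x + s *\<^sub>R e = (x + (s - 2 * pi) *\<^sub>R e) + (2 * pi) *\<^sub>R e"
      by (simp add: algebra_simps)
    then show "g x = (f \<circ> (+) ((s - 2 * pi) *\<^sub>R e)) x"
      using periodic[of "x + (s - 2 * pi) *\<^sub>R e"] by (simp add: g_def e_def add_ac)
  qed
  have T: "torus_cube = cbox (0::real^'d) (\<chi> i. 2 * pi)" by (simp add: torus_cube_def)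
  \<comment> \<open>Cut the cube at \<open>x $ j = 2\<pi> - s\<close>: translated by \<open>s\<close>, the lower slab becomes
    \<open>{x $ j \<ge> s}\<close>; translated by \<open>s - 2\<pi>\<close> (using periodicity), the upper slab becomes \<open>{x $ j \<le> s}\<close>.\<close>
  have g_int: "g integrable_on torus_cube"
    unfolding g_shift T using integrable_on_shift_cbox f_int by blast
  have "integral torus_cube g
      = integral (torus_cube \<inter> {x. x \<bullet> e \<le> c}) g + integral (torus_cube \<inter> {x. x \<bullet> e \<ge> c}) g"
    using integral_split[OF g_int[unfolded T] e] T by simp
  also have "integral (torus_cube \<inter> {x. x \<bullet> e \<le> c}) g = integral (torus_cube \<inter> {x. x \<bullet> e \<ge> s}) f"
  proof -
    have "cbox (0 + s *\<^sub>R e) ((\<chi> i. if i = j then c else 2 * pi) + s *\<^sub>R e)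
        = cbox (\<chi> i. if i = j then s else 0) (\<chi> i. 2 * pi)"
      by (rule arg_cong2[where f = cbox]) (auto simp: vec_eq_iff e_def axis_def c_def)
    then show ?thesis
      using integral_shift_cbox_plus[of 0 _ f "s *\<^sub>R e"]
      unfolding torus_cube_Int_halfspace[OF c, of j] torus_cube_Int_halfspace[OF s, of j] g_shift e_def
      by metis
  qed
  also have "integral (torus_cube \<inter> {x. x \<bullet> e \<ge> c}) g = integral (torus_cube \<inter> {x. x \<bullet> e \<le> s}) f"
  proof -
    have "cbox ((\<chi> i. if i = j then c else 0) + (s - 2 * pi) *\<^sub>R e) ((\<chi> i. 2 * pi) + (s - 2 * pi) *\<^sub>R e)
        = cbox 0 (\<chi> i. if i = j then s else 2 * pi)"
      by (rule arg_cong2[where f = cbox]) (auto simp: vec_eq_iff e_def axis_def c_def)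
    then show ?thesis
      using integral_shift_cbox_plus[of _ _ f "(s - 2 * pi) *\<^sub>R e"]
      unfolding torus_cube_Int_halfspace[OF c, of j] torus_cube_Int_halfspace[OF s, of j] g_shift_back e_def
      by metis
  qed
  also have "integral (torus_cube \<inter> {x. x \<bullet> e \<ge> s}) f + integral (torus_cube \<inter> {x. x \<bullet> e \<le> s}) f
      = integral torus_cube f"
    using integral_split[OF f_int e, of 0 "\<chi> i. 2 * pi" s] T by simp
  finally show ?thesis by (simp add: g_def e_def)
qed

lemma has_integral_const_torus_cube:
  "((\<lambda>k::real^'d. z) has_integral (of_real ((2 * pi) ^ CARD('d)) * z)) torus_cube"
proof -
  have "cbox 0 (\<chi> i. 2 * pi) \<noteq> ({} :: (real^'d) set)"
    using mem_box_cart(2)[of 0 0 "\<chi> i. 2 * pi"] by fastforce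
  then show ?thesis
    using has_integral_const[of z 0 "\<chi> i. 2 * pi :: real^'d"]
    by (simp add: torus_cube_def content_cbox_cart scaleR_conv_of_real)
qed

lemma mean_torus_cube_eqI:
  fixes f :: "real^'d \<Rightarrow> complex"
  assumes "(f has_integral (of_real ((2 * pi) ^ CARD('d)) * z)) (torus_cube :: (real^'d) set)"
  shows "(1 / (2 * pi) ^ CARD('d)) * integral torus_cube f = z"
  using integral_unique[OF assms] by simp

lemma pair_int_add: "pair_int (s + t) k = pair_int s k + pair_int t k"
  by (simp add: pair_int_def algebra_simps sum.distrib)

lemma pair_int_uminus: "pair_int (- t) k = - pair_int t k"
  by (simp add: pair_int_def sum_negf)

lemma pair_int_0_left [simp]: "pair_int 0 k = 0"
  and pair_int_0_right [simp]: "pair_int t 0 = 0"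
  by (simp_all add: pair_int_def)

lemma pair_int_add_axis: "pair_int t (k + r *\<^sub>R axis j 1) = pair_int t k + of_int (t $ j) * r"
  by (simp add: pair_int_def algebra_simps sum.distrib axis_def if_distrib[of "\<lambda>z. _ * z"]
      sum.delta cong: if_cong)

lemma continuous_on_pair_int: "continuous_on UNIV (pair_int t)"
  unfolding pair_int_def by (intro continuous_intros)

lemma cis_add_of_int_mult_2pi: "cis (u + of_int m * (2 * pi)) = cis u"
proof -
  have "cis (of_int m * (2 * pi)) = 1"
    using cos_int_2pin[of m] sin_int_2pin[of m] by (simp add: cis.ctr complex_eq_iff mult.commute)
  then show ?thesis by (metis cis_mult mult_1_right)
qed

text \<open>For \<open>t $ j \<noteq> 0\<close>, translation by \<open>\<pi> / \<bar>t $ j\<bar>\<close> along the \<open>j\<close>-th axis flips the sign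
  of the character but not its integral over the period cube.\<close>

lemma has_integral_cis_pair_int_torus_cube:
  fixes t :: "int^'d"
  shows "((\<lambda>k::real^'d. cis (a + pair_int t k)) has_integral
           (if t = 0 then of_real ((2 * pi) ^ CARD('d)) * cis a else 0)) torus_cube"
proof (cases "t = 0")
  case True
  then show ?thesis using has_integral_const_torus_cube by simp
next
  case False
  then obtain j where tj: "t $ j \<noteq> 0" by (auto simp: vec_eq_iff)
  define f where "f = (\<lambda>k::real^'d. cis (a + pair_int t k))"
  have cont: "continuous_on UNIV f"
    unfolding f_def by (intro continuous_intros continuous_on_pair_int continuous_on_cis)
  have periodic: "\<And>x. f (x + (2 * pi) *\<^sub>R axis j 1) = f x"
    unfolding f_def pair_int_add_axis by (metis add.assoc cis_add_of_int_mult_2pi mult.commute)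
  define s where "s = pi / \<bar>of_int (t $ j)\<bar>"
  have "\<bar>real_of_int (t $ j)\<bar> \<ge> 1" using tj by linarith
  then have s: "0 \<le> s" "s \<le> 2 * pi" unfolding s_def using pi_gt_zero by (auto simp: divide_simps)
  have "of_int (t $ j) * s = pi \<or> of_int (t $ j) * s = - pi"
    using tj unfolding s_def by (cases "t $ j > 0") (auto simp: abs_if)
  then have "cis (of_int (t $ j) * s) = -1" by (auto simp: cis.ctr complex_eq_iff)
  then have antiperiodic: "\<And>x. f (x + s *\<^sub>R axis j 1) = - f x"
    unfolding f_def pair_int_add_axis by (metis add.assoc cis_mult mult_minus1_right)
  have "integral torus_cube f = - integral torus_cube f"
    using integral_torus_cube_translate_axis[OF cont periodic s] antiperiodic integral_neg[of torus_cube f]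
    by simp
  moreover have "f integrable_on torus_cube"
    unfolding torus_cube_def using cont continuous_on_subset integrable_continuous by blast
  ultimately show ?thesis using False integrable_integral by (fastforce simp: f_def)
qed

definition magnetic_adjacency ::
  "('e::finite \<Rightarrow> 'v) \<Rightarrow> ('e \<Rightarrow> 'v) \<Rightarrow> ('e \<Rightarrow> int^'d) \<Rightarrow> ('e \<Rightarrow> real) \<Rightarrow> real^'d \<Rightarrow> 'v \<Rightarrow> 'v \<Rightarrow> complex"
  where "magnetic_adjacency src tgt tau alpha k x y =
    (\<Sum>e\<in>{e. src e = x \<and> tgt e = y}. cis (alpha e + pair_int (tau e) k))"

lemma Hmat_nth:
  "Hmat src tgt tau alpha V k $ x $ y = magnetic_adjacency src tgt tau alpha k x y
     + (if x = y then complex_of_real (V x - real (kappa src x)) else 0)"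
  by (simp add: Hmat_def magnetic_adjacency_def)

definition reverse_cycle :: "('e \<Rightarrow> 'e) \<Rightarrow> 'e list \<Rightarrow> 'e list"
  where "reverse_cycle einv c = rev (map einv c)"

lemma phase_singleton [simp]: "phase tau alpha [e] k = alpha e + pair_int (tau e) k"
  by (simp add: phase_def flux_def cyc_index_def)

lemma phase_at_0: "phase tau alpha c 0 = flux alpha c"
  by (simp add: phase_def)

lemma cis_phase_length_2:
  "cis (phase tau alpha [a, b] k) = cis (alpha a + pair_int (tau a) k) * cis (alpha b + pair_int (tau b) k)"
  by (simp add: phase_def flux_def cyc_index_def pair_int_add cis_mult algebra_simps)

lemma cycles_1_eq: "cycles src tgt 1 = (\<lambda>e. [e]) ` {e. src e = tgt e}"
proof (intro set_eqI iffI)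
  fix c
  assume c: "c \<in> cycles src tgt 1"
  then obtain e where "c = [e]" by (auto simp: cycles_def length_Suc_conv)
  with c show "c \<in> (\<lambda>e. [e]) ` {e. src e = tgt e}" by (auto simp: cycles_def)
qed (auto simp: cycles_def)

lemma cycles_2_eq:
  "cycles src tgt 2 = (\<lambda>(a, b). [a, b]) ` {(a, b). tgt a = src b \<and> tgt b = src a}"
proof (intro set_eqI iffI)
  fix c
  assume c: "c \<in> cycles src tgt 2"
  then obtain a b where "c = [a, b]" by (auto simp: cycles_def length_Suc_conv numeral_2_eq_2)
  with c show "c \<in> (\<lambda>(a, b). [a, b]) ` {(a, b). tgt a = src b \<and> tgt b = src a}"
    by (auto simp: cycles_def)
qed (auto simp: cycles_def less_2_cases_iff)

lemma finite_cycles: "finite (cycles (src :: 'e::finite \<Rightarrow> 'v) tgt n)"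
  by (rule finite_subset[OF _ finite_lists_length_eq[of UNIV n]]) (auto simp: cycles_def)

lemma sum_edges_by_endpoints:
  fixes src tgt :: "'e::finite \<Rightarrow> 'v::finite"
  shows "(\<Sum>x\<in>UNIV. \<Sum>y\<in>UNIV. \<Sum>e\<in>{e. src e = x \<and> tgt e = y}. G e) = (\<Sum>e\<in>UNIV. G e)"
proof -
  have "(\<Sum>x\<in>UNIV. \<Sum>y\<in>UNIV. \<Sum>e\<in>{e. src e = x \<and> tgt e = y}. G e)
      = (\<Sum>p\<in>UNIV. \<Sum>e\<in>{e \<in> UNIV. (src e, tgt e) = p}. G e)"
    by (simp add: sum.cartesian_product split_def prod_eq_iff)
  also have "\<dots> = (\<Sum>e\<in>UNIV. G e)"
    by (rule sum.group) auto
  finally show ?thesis .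
qed

lemma sum_loops_by_vertex:
  fixes src tgt :: "'e::finite \<Rightarrow> 'v::finite"
  shows "(\<Sum>x\<in>UNIV. \<Sum>e\<in>{e. src e = x \<and> tgt e = x}. G e) = (\<Sum>e\<in>{e. src e = tgt e}. G e)"
proof -
  have "(\<Sum>x\<in>UNIV. \<Sum>e\<in>{e \<in> {e. src e = tgt e}. src e = x}. G e) = (\<Sum>e\<in>{e. src e = tgt e}. G e)"
    by (rule sum.group) auto
  moreover have "\<And>x. {e \<in> {e. src e = tgt e}. src e = x} = {e. src e = x \<and> tgt e = x}" by auto
  ultimately show ?thesis by simp
qed

lemma sum_diag_magnetic_adjacency_eq_cycles_1:
  fixes src tgt :: "'e::finite \<Rightarrow> 'v::finite"
  shows "(\<Sum>x\<in>UNIV. f x * magnetic_adjacency src tgt tau alpha k x x)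
    = (\<Sum>c\<in>cycles src tgt 1. f (src (hd c)) * cis (phase tau alpha c k))"
proof -
  have "(\<Sum>x\<in>UNIV. f x * magnetic_adjacency src tgt tau alpha k x x)
      = (\<Sum>x\<in>UNIV. \<Sum>e\<in>{e. src e = x \<and> tgt e = x}. f (src e) * cis (alpha e + pair_int (tau e) k))"
    unfolding magnetic_adjacency_def sum_distrib_left by (intro sum.cong) auto
  also have "\<dots> = (\<Sum>e\<in>{e. src e = tgt e}. f (src e) * cis (alpha e + pair_int (tau e) k))"
    by (rule sum_loops_by_vertex)
  also have "\<dots> = (\<Sum>c\<in>cycles src tgt 1. f (src (hd c)) * cis (phase tau alpha c k))"
    unfolding cycles_1_eq by (subst sum.reindex) (auto simp: inj_on_def)
  finally show ?thesis .
qed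

lemma sum_magnetic_adjacency_products_eq_cycles_2:
  fixes src tgt :: "'e::finite \<Rightarrow> 'v::finite"
  shows "(\<Sum>x\<in>UNIV. \<Sum>y\<in>UNIV. magnetic_adjacency src tgt tau alpha k x y * magnetic_adjacency src tgt tau alpha k y x)
    = (\<Sum>c\<in>cycles src tgt 2. cis (phase tau alpha c k))"
proof -
  let ?A = "magnetic_adjacency src tgt tau alpha k"
  let ?\<chi> = "\<lambda>e. cis (alpha e + pair_int (tau e) k)"
  define P where "P = {(a, b). tgt a = src b \<and> tgt b = src a}"
  have "(\<Sum>x\<in>UNIV. \<Sum>y\<in>UNIV. ?A x y * ?A y x)
      = (\<Sum>x\<in>UNIV. \<Sum>y\<in>UNIV. \<Sum>a\<in>{e. src e = x \<and> tgt e = y}. ?\<chi> a * ?A (tgt a) (src a))"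
    unfolding magnetic_adjacency_def sum_distrib_right by (intro sum.cong) auto
  also have "\<dots> = (\<Sum>a\<in>UNIV. ?\<chi> a * ?A (tgt a) (src a))"
    by (rule sum_edges_by_endpoints)
  also have "\<dots> = (\<Sum>a\<in>UNIV. \<Sum>b\<in>{b. src b = tgt a \<and> tgt b = src a}. ?\<chi> a * ?\<chi> b)"
    by (simp add: magnetic_adjacency_def sum_distrib_left)
  also have "\<dots> = (\<Sum>(a, b)\<in>P. ?\<chi> a * ?\<chi> b)"
    unfolding P_def by (subst sum.Sigma) (auto intro!: sum.cong)
  also have "\<dots> = (\<Sum>c\<in>cycles src tgt 2. cis (phase tau alpha c k))"
    unfolding cycles_2_eq P_def[symmetric]
    by (subst sum.reindex) (auto simp: inj_on_def cis_phase_length_2 intro!: sum.cong)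
  finally show ?thesis .
qed

lemma trace_Hmat_cis:
  fixes src tgt :: "'e::finite \<Rightarrow> 'v::finite"
  shows "trace (Hmat src tgt tau alpha V k) =
    complex_of_real (\<Sum>x\<in>UNIV. V x - real (kappa src x)) + (\<Sum>c\<in>cycles src tgt 1. cis (phase tau alpha c k))"
  using sum_diag_magnetic_adjacency_eq_cycles_1[of "\<lambda>_. 1"] by (simp add: trace_def Hmat_nth sum.distrib)

lemma trace_Hmat_square_cis:
  fixes src tgt :: "'e::finite \<Rightarrow> 'v::finite" and V :: "'v \<Rightarrow> real"
  defines "v \<equiv> \<lambda>x. V x - real (kappa src x)"
  shows "trace (Hmat src tgt tau alpha V k ** Hmat src tgt tau alpha V k) =
    complex_of_real (\<Sum>x\<in>UNIV. (v x)\<^sup>2)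
    + 2 * (\<Sum>c\<in>cycles src tgt 1. complex_of_real (v (src (hd c))) * cis (phase tau alpha c k))
    + (\<Sum>c\<in>cycles src tgt 2. cis (phase tau alpha c k))"
proof -
  let ?A = "magnetic_adjacency src tgt tau alpha k"
  let ?H = "Hmat src tgt tau alpha V k"
  have "?H $ x $ y * ?H $ y $ x = ?A x y * ?A y x
      + (if x = y then 2 * complex_of_real (v x) * ?A x x + complex_of_real ((v x)\<^sup>2) else 0)" for x y
    by (simp add: Hmat_nth v_def power2_eq_square algebra_simps)
  then have "trace (?H ** ?H) = (\<Sum>x\<in>UNIV. \<Sum>y\<in>UNIV. ?A x y * ?A y x)
      + 2 * (\<Sum>x\<in>UNIV. complex_of_real (v x) * ?A x x) + complex_of_real (\<Sum>x\<in>UNIV. (v x)\<^sup>2)"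
    by (simp add: trace_def matrix_matrix_mult_def sum.distrib sum_distrib_left mult.assoc)
  then show ?thesis
    by (simp add: sum_diag_magnetic_adjacency_eq_cycles_1[of "\<lambda>x. complex_of_real (v x)"]
        sum_magnetic_adjacency_products_eq_cycles_2 add_ac)
qed

lemma
  assumes "graph_data src tgt einv tau alpha"
  shows reverse_cycle_reverse_cycle [simp]: "reverse_cycle einv (reverse_cycle einv c) = c"
    and flux_reverse_cycle: "flux alpha (reverse_cycle einv c) = - flux alpha c"
    and cyc_index_reverse_cycle: "cyc_index tau (reverse_cycle einv c) = - cyc_index tau c"
    and phase_reverse_cycle: "phase tau alpha (reverse_cycle einv c) k = - phase tau alpha c k"
proof -
  have inv: "\<And>e. einv (einv e) = e" "\<And>e. alpha (einv e) = - alpha e" "\<And>e. tau (einv e) = - tau e"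
    using assms by (auto simp: graph_data_def)
  show "reverse_cycle einv (reverse_cycle einv c) = c"
    by (simp add: reverse_cycle_def rev_map comp_def inv)
  show flux: "flux alpha (reverse_cycle einv c) = - flux alpha c"
    by (induction c) (auto simp: reverse_cycle_def flux_def inv)
  show index: "cyc_index tau (reverse_cycle einv c) = - cyc_index tau c"
    by (induction c) (auto simp: reverse_cycle_def cyc_index_def inv)
  show "phase tau alpha (reverse_cycle einv c) k = - phase tau alpha c k"
    by (simp add: phase_def flux index pair_int_uminus)
qed

lemma reverse_cycle_in_cycles:
  assumes G: "graph_data src tgt einv tau alpha" and c: "c \<in> cycles src tgt n"
  shows "reverse_cycle einv c \<in> cycles src tgt n"
    and "src (hd (reverse_cycle einv c)) = src (hd c)"
proof -
  have inv: "\<And>e. src (einv e) = tgt e" "\<And>e. tgt (einv e) = src e"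
    using G by (auto simp: graph_data_def)
  have n: "length c = n" "n \<ge> 1"
    and chain: "\<And>s. Suc s < n \<Longrightarrow> tgt (c ! s) = src (c ! Suc s)"
    and closed: "tgt (c ! (n - 1)) = src (c ! 0)"
    using c by (auto simp: cycles_def)
  have nth: "reverse_cycle einv c ! s = einv (c ! (n - 1 - s))" if "s < n" for s
    using that n by (simp add: reverse_cycle_def rev_nth)
  have "tgt (reverse_cycle einv c ! s) = src (reverse_cycle einv c ! Suc s)" if "Suc s < n" for s
    using that chain[of "n - 2 - s"] by (simp add: nth inv Suc_diff_Suc numeral_2_eq_2)
  moreover have "tgt (reverse_cycle einv c ! (n - 1)) = src (reverse_cycle einv c ! 0)"
    using n closed by (simp add: nth inv)
  ultimately show "reverse_cycle einv c \<in> cycles src tgt n"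
    using n by (simp add: cycles_def reverse_cycle_def)
  have "c \<noteq> []" "reverse_cycle einv c \<noteq> []"
    using n by (auto simp: reverse_cycle_def)
  then show "src (hd (reverse_cycle einv c)) = src (hd c)"
    using n closed nth[of 0] by (simp add: hd_conv_nth inv)
qed

lemma reverse_cycle_in_cycles0:
  assumes "graph_data src tgt einv tau alpha" "c \<in> cycles0 src tgt tau n"
  shows "reverse_cycle einv c \<in> cycles0 src tgt tau n"
  using assms by (simp add: cycles0_def reverse_cycle_in_cycles cyc_index_reverse_cycle)

lemma sum_cis_eq_of_real_sum_cos:
  assumes "finite S"
    and "\<And>c. c \<in> S \<Longrightarrow> g c \<in> S" "\<And>c. c \<in> S \<Longrightarrow> g (g c) = c"
    and "\<And>c. c \<in> S \<Longrightarrow> w (g c) = w c" "\<And>c. c \<in> S \<Longrightarrow> \<phi> (g c) = - \<phi> c"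
  shows "(\<Sum>c\<in>S. complex_of_real (w c) * cis (\<phi> c)) = complex_of_real (\<Sum>c\<in>S. w c * cos (\<phi> c))"
proof -
  have "(\<Sum>c\<in>S. w c * sin (\<phi> c)) = (\<Sum>c\<in>S. w (g c) * sin (\<phi> (g c)))"
    by (rule sum.reindex_bij_witness[where i = g and j = g]) (use assms in auto)
  also have "\<dots> = - (\<Sum>c\<in>S. w c * sin (\<phi> c))"
    using assms by (simp add: sum_negf[symmetric])
  finally have "(\<Sum>c\<in>S. w c * sin (\<phi> c)) = 0" by simp
  then show ?thesis by (simp add: complex_eq_iff Re_sum Im_sum)
qed

lemma sum_cis_phase_eq_of_real_sum_cos:
  fixes src tgt :: "'e::finite \<Rightarrow> 'v"
  assumes G: "graph_data src tgt einv tau alpha"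
    and S: "S \<subseteq> cycles src tgt n" "\<And>c. c \<in> S \<Longrightarrow> reverse_cycle einv c \<in> S"
  shows "(\<Sum>c\<in>S. complex_of_real (f (src (hd c))) * cis (phase tau alpha c k))
    = complex_of_real (\<Sum>c\<in>S. f (src (hd c)) * cos (phase tau alpha c k))"
proof (rule sum_cis_eq_of_real_sum_cos[where g = "reverse_cycle einv"])
  show "finite S" using S finite_cycles finite_subset by blast
qed (use S reverse_cycle_in_cycles[OF G] phase_reverse_cycle[OF G] G in auto)

lemma sum_cis_phase_cycles:
  fixes src tgt :: "'e::finite \<Rightarrow> 'v"
  assumes "graph_data src tgt einv tau alpha"
  shows "(\<Sum>c\<in>cycles src tgt n. complex_of_real (f (src (hd c))) * cis (phase tau alpha c k))
    = complex_of_real (\<Sum>c\<in>cycles src tgt n. f (src (hd c)) * cos (phase tau alpha c k))"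
  using assms by (intro sum_cis_phase_eq_of_real_sum_cos reverse_cycle_in_cycles) auto

lemma sum_cis_flux_cycles0:
  fixes src tgt :: "'e::finite \<Rightarrow> 'v"
  assumes "graph_data src tgt einv tau alpha"
  shows "(\<Sum>c\<in>cycles0 src tgt tau n. complex_of_real (f (src (hd c))) * cis (flux alpha c))
    = complex_of_real (\<Sum>c\<in>cycles0 src tgt tau n. f (src (hd c)) * cos (flux alpha c))"
  using sum_cis_phase_eq_of_real_sum_cos[OF assms, of "cycles0 src tgt tau n" n f 0]
    reverse_cycle_in_cycles0[OF assms]
  by (auto simp: phase_at_0 cycles0_def)

lemma has_integral_sum_cis_phase:
  fixes tau :: "'e \<Rightarrow> int^'d"
  assumes "finite S"
  shows "((\<lambda>k::real^'d. \<Sum>c\<in>S. w c * cis (phase tau alpha c k)) has_integral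
    (of_real ((2 * pi) ^ CARD('d)) * (\<Sum>c\<in>{c\<in>S. cyc_index tau c = 0}. w c * cis (flux alpha c))))
    torus_cube"
proof -
  have "((\<lambda>k::real^'d. \<Sum>c\<in>S. w c * cis (phase tau alpha c k)) has_integral
    (\<Sum>c\<in>S. w c * (if cyc_index tau c = 0 then of_real ((2 * pi) ^ CARD('d)) * cis (flux alpha c) else 0)))
    torus_cube"
    using assms unfolding phase_def
    by (intro has_integral_sum has_integral_mult_right has_integral_cis_pair_int_torus_cube)
  then show ?thesis
    using assms by (simp add: sum.inter_filter sum_distrib_left if_distrib mult.left_commute cong: if_cong)
qed

lemma has_integral_sum_cis_phase_cycles:
  fixes src tgt :: "'e::finite \<Rightarrow> 'v" and tau :: "'e \<Rightarrow> int^'d"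
  shows "((\<lambda>k::real^'d. \<Sum>c\<in>cycles src tgt n. w c * cis (phase tau alpha c k)) has_integral
    (of_real ((2 * pi) ^ CARD('d)) * (\<Sum>c\<in>cycles0 src tgt tau n. w c * cis (flux alpha c)))) torus_cube"
  using has_integral_sum_cis_phase[OF finite_cycles] by (simp add: cycles0_def)

lemma trace_Hmat:
  fixes src tgt :: "'e::finite \<Rightarrow> 'v::finite"
  assumes "graph_data src tgt einv tau alpha"
  shows "trace (Hmat src tgt tau alpha V k) = complex_of_real
    ((\<Sum>x\<in>UNIV. V x - real (kappa src x)) + (\<Sum>c\<in>cycles src tgt 1. cos (phase tau alpha c k)))"
  using sum_cis_phase_cycles[OF assms, where f = "\<lambda>_. 1"] by (simp add: trace_Hmat_cis)

lemma trace_Hmat_square: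
  fixes src tgt :: "'e::finite \<Rightarrow> 'v::finite" and V :: "'v \<Rightarrow> real"
  assumes "graph_data src tgt einv tau alpha"
  defines "v \<equiv> \<lambda>x. V x - real (kappa src x)"
  shows "trace (Hmat src tgt tau alpha V k ** Hmat src tgt tau alpha V k) = complex_of_real
    ((\<Sum>x\<in>UNIV. (v x)\<^sup>2) + 2 * (\<Sum>c\<in>cycles src tgt 1. v (src (hd c)) * cos (phase tau alpha c k))
      + (\<Sum>c\<in>cycles src tgt 2. cos (phase tau alpha c k)))"
  using sum_cis_phase_cycles[OF assms(1), where f = v] sum_cis_phase_cycles[OF assms(1), where f = "\<lambda>_. 1"]
  by (simp add: trace_Hmat_square_cis v_def)

lemma mean_trace_Hmat:
  fixes src tgt :: "'e::finite \<Rightarrow> 'v::finite" and tau :: "'e \<Rightarrow> int^'d"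
  assumes G: "graph_data src tgt einv tau alpha"
  shows "(1 / (2 * pi) ^ CARD('d)) * integral torus_cube (\<lambda>k. trace (Hmat src tgt tau alpha V k)) =
    complex_of_real ((\<Sum>x\<in>UNIV. V x - real (kappa src x)) + (\<Sum>c\<in>cycles0 src tgt tau 1. cos (flux alpha c)))"
proof (rule mean_torus_cube_eqI)
  have "((\<lambda>k. trace (Hmat src tgt tau alpha V k)) has_integral of_real ((2 * pi) ^ CARD('d)) *
      (complex_of_real (\<Sum>x\<in>UNIV. V x - real (kappa src x)) + (\<Sum>c\<in>cycles0 src tgt tau 1. cis (flux alpha c))))
      torus_cube"
    unfolding trace_Hmat_cis distrib_left
    by (intro has_integral_add has_integral_const_torus_cube
        has_integral_sum_cis_phase_cycles[where w = "\<lambda>_. 1", unfolded mult_1])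
  then show "((\<lambda>k. trace (Hmat src tgt tau alpha V k)) has_integral of_real ((2 * pi) ^ CARD('d)) *
      complex_of_real ((\<Sum>x\<in>UNIV. V x - real (kappa src x)) + (\<Sum>c\<in>cycles0 src tgt tau 1. cos (flux alpha c))))
      torus_cube"
    using sum_cis_flux_cycles0[OF G, where f = "\<lambda>_. 1"] by simp
qed

lemma mean_trace_Hmat_square:
  fixes src tgt :: "'e::finite \<Rightarrow> 'v::finite" and tau :: "'e \<Rightarrow> int^'d" and V :: "'v \<Rightarrow> real"
  assumes G: "graph_data src tgt einv tau alpha"
  defines "v \<equiv> \<lambda>x. V x - real (kappa src x)"
  shows "(1 / (2 * pi) ^ CARD('d)) *
      integral torus_cube (\<lambda>k. trace (Hmat src tgt tau alpha V k ** Hmat src tgt tau alpha V k)) =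
    complex_of_real ((\<Sum>x\<in>UNIV. (v x)\<^sup>2) + 2 * (\<Sum>c\<in>cycles0 src tgt tau 1. v (src (hd c)) * cos (flux alpha c))
      + (\<Sum>c\<in>cycles0 src tgt tau 2. cos (flux alpha c)))"
proof (rule mean_torus_cube_eqI)
  have "((\<lambda>k. trace (Hmat src tgt tau alpha V k ** Hmat src tgt tau alpha V k)) has_integral
      of_real ((2 * pi) ^ CARD('d)) * (complex_of_real (\<Sum>x\<in>UNIV. (v x)\<^sup>2)
        + 2 * (\<Sum>c\<in>cycles0 src tgt tau 1. complex_of_real (v (src (hd c))) * cis (flux alpha c))
        + (\<Sum>c\<in>cycles0 src tgt tau 2. cis (flux alpha c)))) torus_cube"
    unfolding trace_Hmat_square_cis v_def distrib_left mult.left_commute[of _ 2]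
    by (intro has_integral_add has_integral_mult_right has_integral_const_torus_cube
        has_integral_sum_cis_phase_cycles has_integral_sum_cis_phase_cycles[where w = "\<lambda>_. 1", unfolded mult_1])
  then show "((\<lambda>k. trace (Hmat src tgt tau alpha V k ** Hmat src tgt tau alpha V k)) has_integral
      of_real ((2 * pi) ^ CARD('d)) * complex_of_real ((\<Sum>x\<in>UNIV. (v x)\<^sup>2)
        + 2 * (\<Sum>c\<in>cycles0 src tgt tau 1. v (src (hd c)) * cos (flux alpha c))
        + (\<Sum>c\<in>cycles0 src tgt tau 2. cos (flux alpha c)))) torus_cube"
    using sum_cis_flux_cycles0[OF G, where f = v] sum_cis_flux_cycles0[OF G, where f = "\<lambda>_. 1"] by simp
qed

lemma
  assumes "no_loops src tgt"
  shows cycles_1_no_loops: "cycles src tgt 1 = {}"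
    and cycles0_1_no_loops: "cycles0 src tgt tau 1 = {}"
  using assms unfolding cycles_1_eq cycles0_def no_loops_def by auto

text \<open>Without multiple edges, the only 2-cycles are the backtracking ones \<open>[e, einv e]\<close>,
  each of phase zero.\<close>

lemma
  fixes src tgt :: "'e::finite \<Rightarrow> 'v"
  assumes G: "graph_data src tgt einv tau alpha" and "no_multi_edges src tgt"
  shows sum_cos_phase_cycles_2_no_multi_edges:
      "(\<Sum>c\<in>cycles src tgt 2. cos (phase tau alpha c k)) = real CARD('e)"
    and sum_cos_flux_cycles0_2_no_multi_edges:
      "(\<Sum>c\<in>cycles0 src tgt tau 2. cos (flux alpha c)) = real CARD('e)"
proof -
  have "{(a, b). tgt a = src b \<and> tgt b = src a} = (\<lambda>a. (a, einv a)) ` UNIV"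
    using assms unfolding graph_data_def no_multi_edges_def by (auto simp: image_iff)
  then have cycles_2: "cycles src tgt 2 = (\<lambda>a. [a, einv a]) ` UNIV"
    unfolding cycles_2_eq by auto
  have backtrack: "phase tau alpha [a, einv a] k = 0" "cyc_index tau [a, einv a] = 0" for a k
    using G by (simp_all add: graph_data_def phase_def flux_def cyc_index_def)
  have inj: "inj (\<lambda>a. [a, einv a])" by (auto simp: inj_on_def)
  show sum_2: "(\<Sum>c\<in>cycles src tgt 2. cos (phase tau alpha c k)) = real CARD('e)" for k
    unfolding cycles_2 using inj by (simp add: sum.reindex backtrack)
  have "cycles0 src tgt tau 2 = cycles src tgt 2"
    unfolding cycles0_def cycles_2 by (auto simp: backtrack)
  then show "(\<Sum>c\<in>cycles0 src tgt tau 2. cos (flux alpha c)) = real CARD('e)"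
    using sum_2[of 0] by (simp add: phase_at_0)
qed

lemma
  fixes src tgt :: "'e::finite \<Rightarrow> 'v::finite" and tau :: "'e \<Rightarrow> int^'d"
  assumes G: "graph_data src tgt einv tau alpha" and loopless: "no_loops src tgt"
  shows trace_Hmat_no_loops:
      "trace (Hmat src tgt tau alpha V k) = complex_of_real (\<Sum>x\<in>UNIV. V x - real (kappa src x))"
    and mean_trace_Hmat_no_loops:
      "(1 / (2 * pi) ^ CARD('d)) * integral torus_cube (\<lambda>k. trace (Hmat src tgt tau alpha V k))
        = complex_of_real (\<Sum>x\<in>UNIV. V x - real (kappa src x))"
  using trace_Hmat[OF G] mean_trace_Hmat[OF G]
  unfolding cycles_1_no_loops[OF loopless] cycles0_1_no_loops[OF loopless] by simp_all

lemma
  fixes src tgt :: "'e::finite \<Rightarrow> 'v::finite" and tau :: "'e \<Rightarrow> int^'d" and V :: "'v \<Rightarrow> real"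
  assumes G: "graph_data src tgt einv tau alpha"
    and simple: "no_loops src tgt" "no_multi_edges src tgt"
  defines "v \<equiv> \<lambda>x. V x - real (kappa src x)"
  shows trace_Hmat_square_simple_graph:
      "trace (Hmat src tgt tau alpha V k ** Hmat src tgt tau alpha V k)
        = complex_of_real (real CARD('e) + (\<Sum>x\<in>UNIV. (v x)\<^sup>2))"
    and mean_trace_Hmat_square_simple_graph:
      "(1 / (2 * pi) ^ CARD('d)) *
        integral torus_cube (\<lambda>k. trace (Hmat src tgt tau alpha V k ** Hmat src tgt tau alpha V k))
        = complex_of_real (real CARD('e) + (\<Sum>x\<in>UNIV. (v x)\<^sup>2))"
  using trace_Hmat_square[OF G] mean_trace_Hmat_square[OF G]
  unfolding v_def cycles_1_no_loops[OF simple(1)] cycles0_1_no_loops[OF simple(1)]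
    sum_cos_phase_cycles_2_no_multi_edges[OF G simple(2)] sum_cos_flux_cycles0_2_no_multi_edges[OF G simple(2)]
  by (simp_all add: add.commute)

theorem proposition3p5:
  fixes src tgt :: "'e::finite \<Rightarrow> 'v::finite" and einv :: "'e \<Rightarrow> 'e"
    and tau :: "'e \<Rightarrow> int^'d" and alpha :: "'e \<Rightarrow> real" and V :: "'v \<Rightarrow> real"
  assumes G: "graph_data src tgt einv tau alpha"
  defines "v \<equiv> (\<lambda>x. V x - real (kappa src x))"
      and "H \<equiv> Hmat src tgt tau alpha V"
  shows
   "(\<forall>k. trace (H k) =
        complex_of_real ((\<Sum>x\<in>UNIV. v x) + (\<Sum>c\<in>cycles src tgt 1. cos (phase tau alpha c k))))
    \<and> (\<forall>k. trace (H k ** H k) =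
        complex_of_real ((\<Sum>x\<in>UNIV. (v x)\<^sup>2)
          + 2 * (\<Sum>c\<in>cycles src tgt 1. v (src (hd c)) * cos (phase tau alpha c k))
          + (\<Sum>c\<in>cycles src tgt 2. cos (phase tau alpha c k))))
    \<and> (1 / (2 * pi) ^ CARD('d)) * integral torus_cube (\<lambda>k. trace (H k)) =
        complex_of_real ((\<Sum>x\<in>UNIV. v x) + (\<Sum>c\<in>cycles0 src tgt tau 1. cos (flux alpha c)))
    \<and> (1 / (2 * pi) ^ CARD('d)) * integral torus_cube (\<lambda>k. trace (H k ** H k)) =
        complex_of_real ((\<Sum>x\<in>UNIV. (v x)\<^sup>2)
          + 2 * (\<Sum>c\<in>cycles0 src tgt tau 1. v (src (hd c)) * cos (flux alpha c))
          + (\<Sum>c\<in>cycles0 src tgt tau 2. cos (flux alpha c)))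
    \<and> (no_loops src tgt \<longrightarrow>
        (\<forall>k. trace (H k) = complex_of_real (\<Sum>x\<in>UNIV. v x))
        \<and> (1 / (2 * pi) ^ CARD('d)) * integral torus_cube (\<lambda>k. trace (H k))
            = complex_of_real (\<Sum>x\<in>UNIV. v x))
    \<and> (no_loops src tgt \<and> no_multi_edges src tgt \<longrightarrow>
        (\<forall>k. trace (H k ** H k) = complex_of_real (real CARD('e) + (\<Sum>x\<in>UNIV. (v x)\<^sup>2)))
        \<and> (1 / (2 * pi) ^ CARD('d)) * integral torus_cube (\<lambda>k. trace (H k ** H k))
            = complex_of_real (real CARD('e) + (\<Sum>x\<in>UNIV. (v x)\<^sup>2)))"
  unfolding H_def v_def
  using trace_Hmat[OF G] trace_Hmat_square[OF G] mean_trace_Hmat[OF G] mean_trace_Hmat_square[OF G]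
    trace_Hmat_no_loops[OF G] mean_trace_Hmat_no_loops[OF G]
    trace_Hmat_square_simple_graph[OF G] mean_trace_Hmat_square_simple_graph[OF G]
  by blast

end
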